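(* Every Hausdorff and compact $\mathbb{B}$-topological space is normal; every regular and compact $\mathbb{B}$-topological space is normal.
   Context: $\mathbb{B}=\{0,1,tt,ff\}$ is the four-element Boolean algebra with bottom $0$, top $1$, and $tt,ff$ incomparable complements; $\neg$ its complement, $a\to b=\neg a\vee b$. A $\mathbb{B}$-topology on $X$ is $\tau\subseteq\mathbb{B}^X$ containing all constant maps and closed under arbitrary pointwise joins and finite pointwise meets; $\mu$ is closed if $\neg\mu\in\tau$; $\overline{\nu}$ is the meet of all closed sets $\ge\nu$. $\mathrm{sub}_X(\lambda,\mu)=\bigwedge_x(\lambda(x)\to\mu(x))$. $(X,\tau)$ is compact if the constant map $1_X$ satisfies $\mathrm{sub}_X(1_X,\bigvee\Lambda)=\bigvee_{\lambda\in\Lambda}\mathrm{sub}_X(1_X,\lambda)$ for every directed $\Lambda\subseteq\tau$. Specialization $\mathbb{B}$-order: $\Omega(\tau)(x,y)=\bigwedge_{\lambda\in\tau}(\lambda(x)\to\lambda(y))$. The product $(X,\tau)\times(X,\tau)$ is $X\times X$ with the $\mathbb{B}$-topology generated by the constants and $\{\lambda\circ\pi_1,\lambda\circ\pi_2:\lambda\in\tau\}$. $(X,\tau)$ is $T_0$ if $\Omega(\tau)(x,y)=1=\Omega(\tau)(y,x)$ implies $x=y$; $R_1$ if $\Omega(\tau)$ is closed in $(X,\tau)\times(X,\tau)$; Hausdorff if $T_0$ and $R_1$; regular if every $\lambda\in\tau$ equals $\bigvee\{\mu\in\tau:\overline{\mu}\le\lambda\}$; normal if for every open $\lambda$ and closed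 $\mu$ with $\mu\le\lambda$ there is an open $\nu$ with $\mu\le\nu\le\overline{\nu}\le\lambda$. *)

theory Defs
  imports Main "HOL-Library.Product_Order"
begin

text \<open>The four-element Boolean algebra B = {0,1,tt,ff}, realised as bool \<times> bool with the
componentwise (product) order: 0 = (False,False), 1 = (True,True),
tt = (True,False), ff = (False,True).\<close>

type_synonym B4 = "bool \<times> bool"

definition Btt :: B4 where "Btt = (True, False)"
definition Bff :: B4 where "Bff = (False, True)"

definition Bimp :: "B4 \<Rightarrow> B4 \<Rightarrow> B4" where
  "Bimp a b = sup (- a) b"

text \<open>B-topology on the underlying set X (= UNIV of type 'a); B-valued maps are 'a \<Rightarrow> B4,
with pointwise order, joins (Sup) and meets (inf).\<close>
definition is_Btop :: "('a \<Rightarrow> B4) set \<Rightarrow> bool" where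
  "is_Btop \<tau> \<longleftrightarrow> (\<forall>c. (\<lambda>_. c) \<in> \<tau>) \<and> (\<forall>S. S \<subseteq> \<tau> \<longrightarrow> Sup S \<in> \<tau>)
      \<and> (\<forall>l\<in>\<tau>. \<forall>m\<in>\<tau>. inf l m \<in> \<tau>)"

definition Bclosed :: "('a \<Rightarrow> B4) set \<Rightarrow> ('a \<Rightarrow> B4) \<Rightarrow> bool" where
  "Bclosed \<tau> m \<longleftrightarrow> - m \<in> \<tau>"

definition Bclosure :: "('a \<Rightarrow> B4) set \<Rightarrow> ('a \<Rightarrow> B4) \<Rightarrow> ('a \<Rightarrow> B4)" where
  "Bclosure \<tau> v = Inf {m. Bclosed \<tau> m \<and> v \<le> m}"

definition Bsub :: "('a \<Rightarrow> B4) \<Rightarrow> ('a \<Rightarrow> B4) \<Rightarrow> B4" where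
  "Bsub l m = (INF x. Bimp (l x) (m x))"

definition Bdirected :: "('a \<Rightarrow> B4) set \<Rightarrow> bool" where
  "Bdirected L \<longleftrightarrow> L \<noteq> {} \<and> (\<forall>a\<in>L. \<forall>b\<in>L. \<exists>c\<in>L. a \<le> c \<and> b \<le> c)"

definition Bcompact :: "('a \<Rightarrow> B4) set \<Rightarrow> bool" where
  "Bcompact \<tau> \<longleftrightarrow> (\<forall>L. L \<subseteq> \<tau> \<longrightarrow> Bdirected L \<longrightarrow>
      Bsub (\<lambda>_. top) (Sup L) = (SUP l\<in>L. Bsub (\<lambda>_. top) l))"

definition Bspec :: "('a \<Rightarrow> B4) set \<Rightarrow> 'a \<Rightarrow> 'a \<Rightarrow> B4" where
  "Bspec \<tau> x y = (INF l\<in>\<tau>. Bimp (l x) (l y))"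

definition Bgenerated :: "('a \<Rightarrow> B4) set \<Rightarrow> ('a \<Rightarrow> B4) set" where
  "Bgenerated S = \<Inter> {T. is_Btop T \<and> S \<subseteq> T}"

definition Bprod_top :: "('a \<Rightarrow> B4) set \<Rightarrow> ('a \<times> 'a \<Rightarrow> B4) set" where
  "Bprod_top \<tau> = Bgenerated ({(\<lambda>_. c) | c. True}
      \<union> {l \<circ> fst | l. l \<in> \<tau>} \<union> {l \<circ> snd | l. l \<in> \<tau>})"

definition BT0 :: "('a \<Rightarrow> B4) set \<Rightarrow> bool" where
  "BT0 \<tau> \<longleftrightarrow> (\<forall>x y. Bspec \<tau> x y = top \<and> Bspec \<tau> y x = top \<longrightarrow> x = y)"

definition BR1 :: "('a \<Rightarrow> B4) set \<Rightarrow> bool" where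
  "BR1 \<tau> \<longleftrightarrow> Bclosed (Bprod_top \<tau>) (\<lambda>(x, y). Bspec \<tau> x y)"

definition BHausdorff :: "('a \<Rightarrow> B4) set \<Rightarrow> bool" where
  "BHausdorff \<tau> \<longleftrightarrow> BT0 \<tau> \<and> BR1 \<tau>"

definition Bregular :: "('a \<Rightarrow> B4) set \<Rightarrow> bool" where
  "Bregular \<tau> \<longleftrightarrow> (\<forall>l\<in>\<tau>. l = Sup {m \<in> \<tau>. Bclosure \<tau> m \<le> l})"

definition Bnormal :: "('a \<Rightarrow> B4) set \<Rightarrow> bool" where
  "Bnormal \<tau> \<longleftrightarrow> (\<forall>l m. l \<in> \<tau> \<longrightarrow> Bclosed \<tau> m \<longrightarrow> m \<le> l \<longrightarrow>
      (\<exists>v\<in>\<tau>. m \<le> v \<and> v \<le> Bclosure \<tau> v \<and> Bclosure \<tau> v \<le> l))"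

end

theory Submission
  imports Defs "HOL-Analysis.Abstract_Topological_Spaces"
begin

text \<open>
  Identifying \<open>B\<close> with \<open>bool \<times> bool\<close>, a \<open>B\<close>-topology \<open>\<tau>\<close> splits into two ordinary
  topologies, one for each coordinate projection \<open>p\<close>: the open sets at level \<open>p\<close> are the sets
  \<open>{x. p (\<lambda> x)}\<close> with \<open>\<lambda> \<in> \<tau>\<close>. Compactness of \<open>\<tau>\<close>, applied to the directed family of finite
  joins of a cover, makes both levels compact; regularity of \<open>\<tau>\<close> makes them regular; and
  \<open>R\<^sub>1\<close> for \<open>\<tau>\<close> makes them \<open>R\<^sub>1\<close>, which for compact spaces again yields regularity. Compact
  regular spaces are normal, and because the constants \<open>tt\<close> and \<open>ff\<close> are open, the separating
  sets found at the two levels glue coordinatewise into a witness of normality for \<open>\<tau>\<close>.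
\<close>

\<comment> \<open>Makes De Morgan's law \<open>uminus_Inf\<close> available for \<open>B4\<close>-valued maps.\<close>
instance prod :: (complete_boolean_algebra, complete_boolean_algebra) complete_boolean_algebra ..

lemma proj_Sup: "p \<in> {fst, snd} \<Longrightarrow> p (Sup A :: B4) \<longleftrightarrow> (\<exists>a\<in>A. p a)"
  by (auto simp: fst_Sup snd_Sup; force)

lemma proj_Inf: "p \<in> {fst, snd} \<Longrightarrow> p (Inf A :: B4) \<longleftrightarrow> (\<forall>a\<in>A. p a)"
  by (auto simp: fst_Inf snd_Inf; force)

lemma proj_SUP: "p \<in> {fst, snd} \<Longrightarrow> p (SUP i\<in>I. f i :: B4) \<longleftrightarrow> (\<exists>i\<in>I. p (f i))"
  using proj_Sup[of p "f ` I"] by simp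

lemma proj_INF: "p \<in> {fst, snd} \<Longrightarrow> p (INF i\<in>I. f i :: B4) \<longleftrightarrow> (\<forall>i\<in>I. p (f i))"
  using proj_Inf[of p "f ` I"] by simp

lemma proj_inf: "p \<in> {fst, snd} \<Longrightarrow> p (inf a b :: B4) \<longleftrightarrow> p a \<and> p b"
  by auto

lemma proj_sup: "p \<in> {fst, snd} \<Longrightarrow> p (sup a b :: B4) \<longleftrightarrow> p a \<or> p b"
  by auto

lemma proj_uminus: "p \<in> {fst, snd} \<Longrightarrow> p (- a :: B4) \<longleftrightarrow> \<not> p a"
  by auto

lemma proj_mono: "p \<in> {fst, snd} \<Longrightarrow> a \<le> b \<Longrightarrow> p (a :: B4) \<Longrightarrow> p b"
  by (auto simp: less_eq_prod_def)

lemma proj_Bsub_top: "p \<in> {fst, snd} \<Longrightarrow> p (Bsub (\<lambda>_. top) l) \<longleftrightarrow> (\<forall>x. p (l x))"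
  by (simp add: Bsub_def Bimp_def proj_INF)

lemma Btop_const: "is_Btop \<tau> \<Longrightarrow> (\<lambda>_. c) \<in> \<tau>"
  unfolding is_Btop_def by blast

lemma Btop_Sup: "is_Btop \<tau> \<Longrightarrow> S \<subseteq> \<tau> \<Longrightarrow> Sup S \<in> \<tau>"
  unfolding is_Btop_def by blast

lemma Btop_inf: "is_Btop \<tau> \<Longrightarrow> l \<in> \<tau> \<Longrightarrow> m \<in> \<tau> \<Longrightarrow> inf l m \<in> \<tau>"
  unfolding is_Btop_def by blast

lemma Btop_sup: "is_Btop \<tau> \<Longrightarrow> l \<in> \<tau> \<Longrightarrow> m \<in> \<tau> \<Longrightarrow> sup l m \<in> \<tau>"
  using Btop_Sup[of \<tau> "{l, m}"] by simp

lemma Btop_mix: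
  assumes "is_Btop \<tau>" "l \<in> \<tau>" "m \<in> \<tau>"
  shows "(\<lambda>x. (fst (l x), snd (m x))) \<in> \<tau>"
proof -
  have "(\<lambda>x. (fst (l x), snd (m x))) = sup (inf l (\<lambda>_. Btt)) (inf m (\<lambda>_. Bff))"
    by (auto simp: fun_eq_iff prod_eq_iff Btt_def Bff_def)
  also have "\<dots> \<in> \<tau>"
    using assms by (intro Btop_sup Btop_inf Btop_const)
  finally show ?thesis .
qed

lemma le_Bclosure: "v \<le> Bclosure \<tau> v"
  unfolding Bclosure_def by (rule Inf_greatest) blast

lemma Bclosure_least: "Bclosed \<tau> m \<Longrightarrow> v \<le> m \<Longrightarrow> Bclosure \<tau> v \<le> m"
  unfolding Bclosure_def by (rule Inf_lower) blast

lemma Bclosed_Bclosure: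
  assumes "is_Btop \<tau>"
  shows "Bclosed \<tau> (Bclosure \<tau> v)"
  unfolding Bclosed_def Bclosure_def uminus_Inf
  using assms by (intro Btop_Sup) (auto simp: Bclosed_def)

definition Blevel_topology :: "('a \<Rightarrow> B4) set \<Rightarrow> (B4 \<Rightarrow> bool) \<Rightarrow> 'a topology" where
  "Blevel_topology \<tau> p = topology (\<lambda>U. \<exists>l\<in>\<tau>. U = {x. p (l x)})"

lemma openin_Blevel_topology:
  assumes \<tau>: "is_Btop \<tau>" and p: "p \<in> {fst, snd}"
  shows "openin (Blevel_topology \<tau> p) U \<longleftrightarrow> (\<exists>l\<in>\<tau>. U = {x. p (l x)})"
proof -
  have "istopology (\<lambda>U. \<exists>l\<in>\<tau>. U = {x. p (l x)})"
    unfolding istopology_def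
  proof (intro conjI allI impI)
    fix S T assume "\<exists>l\<in>\<tau>. S = {x. p (l x)}" "\<exists>l\<in>\<tau>. T = {x. p (l x)}"
    then obtain l m where "l \<in> \<tau>" "m \<in> \<tau>" "S = {x. p (l x)}" "T = {x. p (m x)}"
      by blast
    then show "\<exists>k\<in>\<tau>. S \<inter> T = {x. p (k x)}"
      using \<tau> p by (intro bexI[of _ "inf l m"] Btop_inf) (auto simp: proj_inf)
  next
    fix \<K> assume "\<forall>K\<in>\<K>. \<exists>l\<in>\<tau>. K = {x. p (l x)}"
    then obtain l where l: "\<And>K. K \<in> \<K> \<Longrightarrow> l K \<in> \<tau> \<and> K = {x. p (l K x)}"
      by metis
    have "\<Union>\<K> = {x. p (Sup (l ` \<K>) x)}"
      using l p by (auto simp: proj_SUP)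
    then show "\<exists>k\<in>\<tau>. \<Union>\<K> = {x. p (k x)}"
      using l \<tau> by (intro bexI[of _ "Sup (l ` \<K>)"] Btop_Sup) auto
  qed
  then show ?thesis
    unfolding Blevel_topology_def by simp
qed

lemma topspace_Blevel_topology:
  assumes "is_Btop \<tau>" "p \<in> {fst, snd}"
  shows "topspace (Blevel_topology \<tau> p) = UNIV"
proof -
  have "openin (Blevel_topology \<tau> p) UNIV"
    using assms by (auto simp: openin_Blevel_topology intro!: bexI[of _ "\<lambda>_. top"] Btop_const)
  then show ?thesis
    by (simp add: openin_subset top.extremum_uniqueI)
qed

lemma closedin_Blevel_topology:
  assumes "is_Btop \<tau>" "p \<in> {fst, snd}"
  shows "closedin (Blevel_topology \<tau> p) C \<longleftrightarrow> (\<exists>l\<in>\<tau>. C = {x. \<not> p (l x)})"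
  using assms by (auto simp: closedin_def topspace_Blevel_topology openin_Blevel_topology)

lemma compact_space_Blevel_topology:
  assumes \<tau>: "is_Btop \<tau>" "Bcompact \<tau>" and p: "p \<in> {fst, snd}"
  shows "compact_space (Blevel_topology \<tau> p)"
  unfolding compact_space_alt
proof (intro allI impI)
  fix \<U> assume cover: "(\<forall>U\<in>\<U>. openin (Blevel_topology \<tau> p) U) \<and> topspace (Blevel_topology \<tau> p) \<subseteq> \<Union>\<U>"
  then have "\<forall>U\<in>\<U>. \<exists>l\<in>\<tau>. U = {x. p (l x)}"
    by (simp add: openin_Blevel_topology[OF \<tau>(1) p])
  then obtain l where l: "\<And>U. U \<in> \<U> \<Longrightarrow> l U \<in> \<tau>"
    and mem_l: "\<And>U x. U \<in> \<U> \<Longrightarrow> x \<in> U \<longleftrightarrow> p (l U x)"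
    by (metis mem_Collect_eq)
  define L where "L = {Sup (l ` \<F>) | \<F>. finite \<F> \<and> \<F> \<subseteq> \<U>}"
  have "L \<subseteq> \<tau>"
    using l \<tau> by (auto simp: L_def intro!: Btop_Sup)
  moreover have "Bdirected L"
    unfolding Bdirected_def
  proof (intro conjI ballI)
    show "L \<noteq> {}"
      unfolding L_def by blast
  next
    fix a b assume "a \<in> L" "b \<in> L"
    then obtain \<F> \<G> where "finite \<F>" "\<F> \<subseteq> \<U>" "a = Sup (l ` \<F>)"
        "finite \<G>" "\<G> \<subseteq> \<U>" "b = Sup (l ` \<G>)"
      unfolding L_def by blast
    then show "\<exists>c\<in>L. a \<le> c \<and> b \<le> c"
      unfolding L_def by (intro bexI[of _ "Sup (l ` (\<F> \<union> \<G>))"]) (auto intro: Sup_subset_mono)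
  qed
  ultimately have "Bsub (\<lambda>_. top) (Sup L) = (SUP k\<in>L. Bsub (\<lambda>_. top) k)"
    using \<tau> unfolding Bcompact_def by blast
  moreover have "\<forall>x. p (Sup L x)"
  proof
    fix x
    obtain U where "U \<in> \<U>" "x \<in> U"
      using cover \<tau> p by (auto simp: topspace_Blevel_topology)
    moreover have "l U \<in> L"
      using \<open>U \<in> \<U>\<close> unfolding L_def by (intro CollectI exI[of _ "{U}"]) simp
    ultimately show "p (Sup L x)"
      using mem_l p by (auto simp: proj_SUP)
  qed
  ultimately have "\<exists>k\<in>L. \<forall>x. p (k x)"
    using p by (metis proj_Bsub_top proj_SUP)
  then obtain \<F> where \<F>: "finite \<F>" "\<F> \<subseteq> \<U>" and covers: "\<forall>x. p (Sup (l ` \<F>) x)"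
    unfolding L_def by auto
  have "UNIV \<subseteq> \<Union>\<F>"
  proof
    fix x
    obtain U where "U \<in> \<F>" "p (l U x)"
      using covers p by (auto simp: proj_SUP)
    then show "x \<in> \<Union>\<F>"
      using mem_l \<F>(2) by (metis UnionI subsetD)
  qed
  then show "\<exists>\<F>. finite \<F> \<and> \<F> \<subseteq> \<U> \<and> topspace (Blevel_topology \<tau> p) \<subseteq> \<Union>\<F>"
    using \<F> by (intro exI[of _ \<F>]) (simp add: topspace_Blevel_topology[OF \<tau>(1) p])
qed

text \<open>Equivalent to the usual definition: topologically distinguishable points have disjoint
  neighbourhoods.\<close>

definition R1_space :: "'a topology \<Rightarrow> bool" where
  "R1_space X \<longleftrightarrow> openin (prod_topology X X)
     {(x, y) \<in> topspace X \<times> topspace X. \<exists>U. openin X U \<and> x \<in> U \<and> y \<notin> U}"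

lemma R1_space_separation:
  assumes R1: "R1_space X" and W: "openin X W" "x \<in> W" and y: "y \<in> topspace X" "y \<notin> W"
  obtains U V where "openin X U" "openin X V" "x \<in> U" "y \<in> V" "disjnt U V"
proof -
  let ?R = "{(x, y) \<in> topspace X \<times> topspace X. \<exists>U. openin X U \<and> x \<in> U \<and> y \<notin> U}"
  have xyR: "(x, y) \<in> ?R"
    using W y openin_subset by blast
  have "openin (prod_topology X X) ?R"
    using R1 by (simp add: R1_space_def)
  then obtain U V where UV: "openin X U" "openin X V" "x \<in> U" "y \<in> V" "U \<times> V \<subseteq> ?R"
    using xyR unfolding openin_prod_topology_alt by (elim allE impE exE conjE)
  have "disjnt U V"
    unfolding disjnt_iff
  proof (intro allI notI)
    fix z assume "z \<in> U \<and> z \<in> V"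
    then have "(z, z) \<in> ?R"
      using UV(5) by blast
    then show False
      by blast
  qed
  with UV show ?thesis
    by (intro that)
qed

lemma compact_R1_imp_regular_space:
  assumes X: "compact_space X" and R1: "R1_space X"
  shows "regular_space X"
  unfolding regular_space_def
proof clarify
  fix C a assume C: "closedin X C" and a: "a \<in> topspace X" "a \<notin> C"
  have W: "openin X (topspace X - C)" "a \<in> topspace X - C"
    using C a by (simp_all add: closedin_def)
  have "\<exists>U V. openin X U \<and> openin X V \<and> a \<in> U \<and> y \<in> V \<and> disjnt U V" if "y \<in> C" for y
  proof -
    have "y \<in> topspace X" "y \<notin> topspace X - C"
      using that closedin_subset[OF C] by auto
    then obtain U V where "openin X U" "openin X V" "a \<in> U" "y \<in> V" "disjnt U V"
      by (rule R1_space_separation[OF R1 W])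
    then show ?thesis
      by blast
  qed
  then obtain U V where UV: "\<And>y. y \<in> C \<Longrightarrow>
      openin X (U y) \<and> openin X (V y) \<and> a \<in> U y \<and> y \<in> V y \<and> disjnt (U y) (V y)"
    by metis
  have "compactin X C"
    using X C by (rule closedin_compact_space)
  then obtain K where K: "finite K" "K \<subseteq> C" "C \<subseteq> \<Union>(V ` K)"
    unfolding compactin_def using UV
    by (smt (verit, ccfv_threshold) UN_iff finite_subset_image image_iff subsetI)
  show "\<exists>U' V'. openin X U' \<and> openin X V' \<and> a \<in> U' \<and> C \<subseteq> V' \<and> disjnt U' V'"
  proof (intro exI conjI)
    show "openin X ((\<Inter>y\<in>K. U y) \<inter> topspace X)"
      using K UV by (intro openin_INT) auto
    show "disjnt ((\<Inter>y\<in>K. U y) \<inter> topspace X) (\<Union>(V ` K))"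
      using K UV by (fastforce simp: disjnt_iff)
    show "a \<in> (\<Inter>y\<in>K. U y) \<inter> topspace X"
      using K(2) UV a(1) by blast
    show "openin X (\<Union>(V ` K))"
      using K(2) UV by blast
  qed (rule K(3))
qed

lemma openin_prod_Blevel_topology:
  assumes \<tau>: "is_Btop \<tau>" and p: "p \<in> {fst, snd}" and f: "f \<in> Bprod_top \<tau>"
  shows "openin (prod_topology (Blevel_topology \<tau> p) (Blevel_topology \<tau> p)) {z. p (f z)}"
proof -
  let ?X = "Blevel_topology \<tau> p"
  let ?T = "{f. openin (prod_topology ?X ?X) {z. p (f z)}}"
  have "topspace (prod_topology ?X ?X) = UNIV"
    using \<tau> p by (simp add: topspace_Blevel_topology)
  then have top: "openin (prod_topology ?X ?X) UNIV"
    by (metis openin_topspace)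
  have "is_Btop ?T"
    unfolding is_Btop_def
  proof (intro conjI allI impI ballI)
    fix c :: B4
    show "(\<lambda>_. c) \<in> ?T"
      using top by (cases "p c") simp_all
  next
    fix S assume "S \<subseteq> ?T"
    moreover have "{z. p (Sup S z)} = \<Union>((\<lambda>f. {z. p (f z)}) ` S)"
      using p by (auto simp: proj_SUP)
    ultimately show "Sup S \<in> ?T"
      by auto
  next
    fix f g assume "f \<in> ?T" "g \<in> ?T"
    moreover have "{z. p (inf f g z)} = {z. p (f z)} \<inter> {z. p (g z)}"
      using p by auto
    ultimately show "inf f g \<in> ?T"
      by auto
  qed
  moreover have "l \<circ> fst \<in> ?T" "l \<circ> snd \<in> ?T" if "l \<in> \<tau>" for l
  proof -
    have l: "openin ?X {x. p (l x)}"
      using \<tau> p that by (auto simp: openin_Blevel_topology)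
    have univ: "openin ?X UNIV"
      using \<tau> p by (metis openin_topspace topspace_Blevel_topology)
    have eq: "{z. p ((l \<circ> fst) z)} = {x. p (l x)} \<times> UNIV"
      "{z. p ((l \<circ> snd) z)} = UNIV \<times> {x. p (l x)}"
      by auto
    show "l \<circ> fst \<in> ?T" "l \<circ> snd \<in> ?T"
      unfolding mem_Collect_eq eq using l univ by (simp_all add: openin_prod_Times_iff)
  qed
  ultimately have "{(\<lambda>_. c) | c. True} \<union> {l \<circ> fst | l. l \<in> \<tau>} \<union> {l \<circ> snd | l. l \<in> \<tau>} \<subseteq> ?T"
    using Btop_const by blast
  with \<open>is_Btop ?T\<close> show ?thesis
    using f unfolding Bprod_top_def Bgenerated_def by blast
qed

lemma proj_Bspec:
  assumes "is_Btop \<tau>" "p \<in> {fst, snd}"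
  shows "p (Bspec \<tau> x y) \<longleftrightarrow> (\<forall>U. openin (Blevel_topology \<tau> p) U \<longrightarrow> x \<in> U \<longrightarrow> y \<in> U)"
proof -
  have "p (Bspec \<tau> x y) \<longleftrightarrow> (\<forall>l\<in>\<tau>. p (l x) \<longrightarrow> p (l y))"
    using assms(2) by (simp add: Bspec_def Bimp_def proj_INF proj_sup proj_uminus)
  also have "\<dots> \<longleftrightarrow> (\<forall>U. openin (Blevel_topology \<tau> p) U \<longrightarrow> x \<in> U \<longrightarrow> y \<in> U)"
    by (simp add: openin_Blevel_topology[OF assms]) blast
  finally show ?thesis .
qed

lemma R1_space_Blevel_topology:
  assumes \<tau>: "is_Btop \<tau>" "BR1 \<tau>" and p: "p \<in> {fst, snd}"
  shows "R1_space (Blevel_topology \<tau> p)"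
proof -
  have "- (\<lambda>(x, y). Bspec \<tau> x y) \<in> Bprod_top \<tau>"
    using \<tau>(2) unfolding BR1_def Bclosed_def .
  moreover have "{z. p ((- (\<lambda>(x, y). Bspec \<tau> x y)) z)} =
      {(x, y) \<in> topspace (Blevel_topology \<tau> p) \<times> topspace (Blevel_topology \<tau> p).
         \<exists>U. openin (Blevel_topology \<tau> p) U \<and> x \<in> U \<and> y \<notin> U}"
    using \<tau> p by (auto simp: proj_Bspec topspace_Blevel_topology)
  ultimately show ?thesis
    unfolding R1_space_def using openin_prod_Blevel_topology[OF \<tau>(1) p] by metis
qed

lemma regular_space_Blevel_topology:
  assumes \<tau>: "is_Btop \<tau>" "Bregular \<tau>" and p: "p \<in> {fst, snd}"
  shows "regular_space (Blevel_topology \<tau> p)"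
  unfolding neighbourhood_base_of_closedin[symmetric] neighbourhood_base_of
proof clarify
  fix W x assume "openin (Blevel_topology \<tau> p) W" "x \<in> W"
  then obtain w where w: "w \<in> \<tau>" "W = {z. p (w z)}" "p (w x)"
    using \<tau>(1) p by (auto simp: openin_Blevel_topology)
  have "w = Sup {m \<in> \<tau>. Bclosure \<tau> m \<le> w}"
    using \<tau>(2) w(1) unfolding Bregular_def by blast
  then have "p (Sup {m \<in> \<tau>. Bclosure \<tau> m \<le> w} x)"
    using w(3) by (rule subst[where P = "\<lambda>f. p (f x)"])
  then obtain m where m: "m \<in> \<tau>" "Bclosure \<tau> m \<le> w" "p (m x)"
    using p by (auto simp: proj_SUP)
  show "\<exists>U V. openin (Blevel_topology \<tau> p) U \<and> closedin (Blevel_topology \<tau> p) V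
      \<and> x \<in> U \<and> U \<subseteq> V \<and> V \<subseteq> W"
  proof (intro exI conjI)
    show "openin (Blevel_topology \<tau> p) {z. p (m z)}"
      using \<tau>(1) p m(1) by (auto simp: openin_Blevel_topology)
    show "closedin (Blevel_topology \<tau> p) {z. p (Bclosure \<tau> m z)}"
      using Bclosed_Bclosure[OF \<tau>(1), of m] \<tau>(1) p
      by (auto simp: closedin_Blevel_topology Bclosed_def intro!: bexI[of _ "- Bclosure \<tau> m"])
    show "{z. p (m z)} \<subseteq> {z. p (Bclosure \<tau> m z)}"
      using p le_Bclosure[of m \<tau>] by (auto intro: proj_mono dest: le_funD)
    show "{z. p (Bclosure \<tau> m z)} \<subseteq> W"
      using p m(2) w(2) by (auto intro: proj_mono dest: le_funD)
  qed (use m(3) in simp)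
qed

lemma Blevel_topology_normal_separation:
  assumes \<tau>: "is_Btop \<tau>" and p: "p \<in> {fst, snd}" and normal: "normal_space (Blevel_topology \<tau> p)"
    and l: "l \<in> \<tau>" and m: "Bclosed \<tau> m" and "m \<le> l"
  obtains a c where "a \<in> \<tau>" "c \<in> \<tau>" "{x. p (m x)} \<subseteq> {x. p (a x)}"
    "{x. p (a x)} \<subseteq> {x. \<not> p (c x)}" "{x. \<not> p (c x)} \<subseteq> {x. p (l x)}"
proof -
  let ?X = "Blevel_topology \<tau> p"
  have "closedin ?X {x. p (m x)}"
    using m \<tau> p by (auto simp: closedin_Blevel_topology Bclosed_def intro!: bexI[of _ "- m"])
  moreover have "openin ?X {x. p (l x)}"
    using l \<tau> p by (auto simp: openin_Blevel_topology)
  moreover have "{x. p (m x)} \<subseteq> {x. p (l x)}"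
    using p \<open>m \<le> l\<close> by (auto intro: proj_mono dest: le_funD)
  ultimately obtain V where V: "openin ?X V" "{x. p (m x)} \<subseteq> V" "?X closure_of V \<subseteq> {x. p (l x)}"
    using normal_space_alt[THEN iffD1, OF normal, rule_format] by (metis (no_types))
  obtain a where a: "a \<in> \<tau>" "V = {x. p (a x)}"
    using V(1) \<tau> p by (auto simp: openin_Blevel_topology)
  obtain c where c: "c \<in> \<tau>" "?X closure_of V = {x. \<not> p (c x)}"
    using closedin_Blevel_topology[OF \<tau> p, of "?X closure_of V"] by auto
  have "V \<subseteq> ?X closure_of V"
    using V(1) by (simp add: closure_of_subset openin_subset)
  then have "{x. p (a x)} \<subseteq> {x. \<not> p (c x)}"
    by (simp only: a(2)[symmetric] c(2)[symmetric])
  moreover have "{x. p (m x)} \<subseteq> {x. p (a x)}" "{x. \<not> p (c x)} \<subseteq> {x. p (l x)}"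
    using V(2,3) by (simp_all only: a(2)[symmetric] c(2)[symmetric])
  ultimately show ?thesis
    by (intro that[OF a(1) c(1)])
qed

lemma Bnormal_if_normal_space_Blevel_topology:
  assumes \<tau>: "is_Btop \<tau>" and normal: "\<And>p. p \<in> {fst, snd} \<Longrightarrow> normal_space (Blevel_topology \<tau> p)"
  shows "Bnormal \<tau>"
  unfolding Bnormal_def
proof (intro allI impI)
  fix l m assume l: "l \<in> \<tau>" and m: "Bclosed \<tau> m" and "m \<le> l"
  obtain a1 c1 where "a1 \<in> \<tau>" "c1 \<in> \<tau>" and sep1: "{x. fst (m x)} \<subseteq> {x. fst (a1 x)}"
      "{x. fst (a1 x)} \<subseteq> {x. \<not> fst (c1 x)}" "{x. \<not> fst (c1 x)} \<subseteq> {x. fst (l x)}"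
    using Blevel_topology_normal_separation[OF \<tau> _ normal l m \<open>m \<le> l\<close>, of fst] by auto
  obtain a2 c2 where "a2 \<in> \<tau>" "c2 \<in> \<tau>" and sep2: "{x. snd (m x)} \<subseteq> {x. snd (a2 x)}"
      "{x. snd (a2 x)} \<subseteq> {x. \<not> snd (c2 x)}" "{x. \<not> snd (c2 x)} \<subseteq> {x. snd (l x)}"
    using Blevel_topology_normal_separation[OF \<tau> _ normal l m \<open>m \<le> l\<close>, of snd] by auto
  define v where "v = (\<lambda>x. (fst (a1 x), snd (a2 x)))"
  define c where "c = (\<lambda>x. (fst (c1 x), snd (c2 x)))"
  have "v \<in> \<tau>" "c \<in> \<tau>"
    unfolding v_def c_def using \<tau> \<open>a1 \<in> \<tau>\<close> \<open>a2 \<in> \<tau>\<close> \<open>c1 \<in> \<tau>\<close> \<open>c2 \<in> \<tau>\<close>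
    by (simp_all add: Btop_mix)
  have "m \<le> v" "v \<le> - c" "- c \<le> l"
    using sep1 sep2 by (auto simp: v_def c_def le_fun_def less_eq_prod_def subset_iff)
  have "Bclosure \<tau> v \<le> l"
    using Bclosure_least[of \<tau> "- c" v] \<open>c \<in> \<tau>\<close> \<open>v \<le> - c\<close> \<open>- c \<le> l\<close>
    by (auto simp: Bclosed_def)
  then show "\<exists>v\<in>\<tau>. m \<le> v \<and> v \<le> Bclosure \<tau> v \<and> Bclosure \<tau> v \<le> l"
    using \<open>v \<in> \<tau>\<close> \<open>m \<le> v\<close> le_Bclosure by blast
qed

theorem mainTheorem20:
  fixes \<tau> :: "('a \<Rightarrow> B4) set"
  assumes "is_Btop \<tau>" and "Bcompact \<tau>"
  shows "(BHausdorff \<tau> \<longrightarrow> Bnormal \<tau>) \<and> (Bregular \<tau> \<longrightarrow> Bnormal \<tau>)"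
proof -
  have "normal_space (Blevel_topology \<tau> p)"
    if p: "p \<in> {fst, snd}" and "BHausdorff \<tau> \<or> Bregular \<tau>" for p
  proof -
    have compact: "compact_space (Blevel_topology \<tau> p)"
      using assms p by (rule compact_space_Blevel_topology)
    from \<open>BHausdorff \<tau> \<or> Bregular \<tau>\<close> have "regular_space (Blevel_topology \<tau> p)"
    proof
      assume "BHausdorff \<tau>"
      then have "R1_space (Blevel_topology \<tau> p)"
        using assms(1) p by (simp add: BHausdorff_def R1_space_Blevel_topology)
      with compact show ?thesis
        by (rule compact_R1_imp_regular_space)
    next
      assume "Bregular \<tau>"
      with assms(1) p show ?thesis
        by (simp add: regular_space_Blevel_topology)
    qed
    with compact show ?thesis
      by (simp add: compact_Hausdorff_or_regular_imp_normal_space)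
  qed
  then show ?thesis
    using Bnormal_if_normal_space_Blevel_topology[OF assms(1)] by blast
qed

end
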